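(* Let $L\subseteq[0,1]^2$ be a Borel set with $m(L)>0$. Then there exists a compact set $K\subseteq L$ with $m(K)>0$.
   Context: $\lambda$ is Lebesgue measure on $[0,1]$. For a measurable set $L\subseteq[0,1]^2$, define $m(L)=\inf\{\lambda(A)+\lambda(B): L\subseteq (A\times[0,1])\cup([0,1]\times B)\}$, where $A,B$ range over measurable subsets of $[0,1]$. *)

theory Defs
  imports "HOL-Analysis.Analysis"
begin

definition cover_m :: "(real \<times> real) set \<Rightarrow> real" where
  "cover_m L = Inf {measure lebesgue A + measure lebesgue B | A B.
      A \<in> sets lebesgue \<and> B \<in> sets lebesgue \<and> A \<subseteq> {0..1} \<and> B \<subseteq> {0..1} \<and>
      L \<subseteq> (A \<times> {0..1}) \<union> ({0..1} \<times> B)}"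

end

theory Submission
  imports Defs
begin

text \<open>The functional \<open>m\<close> is a Choquet capacity on the unit square: it is monotone, upper
  semicontinuous on compact sets (an almost optimal cover of \<open>K\<close> can be thickened to an open one that
  also serves a neighbourhood of \<open>K\<close>), and continuous along increasing sequences. Every Borel subset
  of the square is the projection of a \<open>K\<^sub>\<sigma>\<^sub>\<delta>\<close> subset of \<open>[0,1]\<^sup>2 \<times> [0,1]\<^sup>\<nat>\<close>, and
  Choquet's capacitability argument then extracts from it a compact set \<open>K \<subseteq> L\<close> with
  \<open>m(K) \<ge> m(L)/2\<close>.

  Continuity from below is the delicate part. The threshold sets of measurable
  \<open>u, v : [0,1] \<rightarrow> [0,1]\<close> with \<open>u(x) + v(y) \<ge> 1\<close> on \<open>L\<close> are covers, so \<open>m(L) \<le> \<integral>u + \<integral>v\<close>.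
  For increasing \<open>L\<^sub>n\<close> with \<open>m(L\<^sub>n) \<le> c\<close>, the almost optimal such pairs for \<open>L\<^sub>n\<close> form shrinking
  convex sets; their elements of almost minimal \<open>L\<^sup>2\<close>-norm form a Cauchy sequence by the
  parallelogram law, and along a fast subsequence \<open>U\<^sub>k\<close> the capped telescoping sum
  \<open>min 1 (U\<^sub>0 + \<Sum>|U\<^sub>k\<^sub>+\<^sub>1 - U\<^sub>k|)\<close> gives such a pair for \<open>\<Union>L\<^sub>n\<close> of cost close to \<open>c\<close>.\<close>

definition covers :: "(real \<times> real) set \<Rightarrow> real set \<Rightarrow> real set \<Rightarrow> bool" where
  "covers L A B \<longleftrightarrow> A \<in> sets lebesgue \<and> B \<in> sets lebesgue \<and> A \<subseteq> {0..1} \<and> B \<subseteq> {0..1} \<and>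
      L \<subseteq> (A \<times> {0..1}) \<union> ({0..1} \<times> B)"

lemma cover_m_eq_Inf_covers:
  "cover_m L = Inf {measure lebesgue A + measure lebesgue B | A B. covers L A B}"
  by (simp add: cover_m_def covers_def)

lemma bdd_below_cover_sums: "bdd_below {measure lebesgue A + measure lebesgue B | A B. covers L A B}"
  by (rule bdd_belowI[of _ 0]) auto

lemma covers_unit_square: "L \<subseteq> {0..1} \<times> {0..1} \<Longrightarrow> covers L {0..1} {}"
  by (auto simp: covers_def)

lemma cover_m_le: "covers L A B \<Longrightarrow> cover_m L \<le> measure lebesgue A + measure lebesgue B"
  unfolding cover_m_eq_Inf_covers by (rule cInf_lower[OF _ bdd_below_cover_sums]) blast

lemma cover_m_lessE:
  assumes "L \<subseteq> {0..1} \<times> {0..1}" "cover_m L < c"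
  obtains A B where "covers L A B" "measure lebesgue A + measure lebesgue B < c"
proof -
  have "{measure lebesgue A + measure lebesgue B | A B. covers L A B} \<noteq> {}"
    using covers_unit_square[OF assms(1)] by blast
  from cInf_lessD[OF this, of c] assms(2)
  obtain s where "s \<in> {measure lebesgue A + measure lebesgue B | A B. covers L A B}" "s < c"
    unfolding cover_m_eq_Inf_covers by auto
  then show thesis
    using that by auto
qed

lemma lmeasurable_outer_open_Int:
  fixes A S :: "'a::euclidean_space set"
  assumes A: "A \<in> sets lebesgue" "A \<subseteq> S" and S: "S \<in> lmeasurable" and "e > 0"
  obtains T where "open T" "A \<subseteq> T" "measure lebesgue (T \<inter> S) \<le> measure lebesgue A + e"
proof -
  obtain T where T: "open T" "A \<subseteq> T" "T - A \<in> lmeasurable" "emeasure lebesgue (T - A) < ennreal e"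
    using sets_lebesgue_outer_open[OF A(1) \<open>e > 0\<close>] by blast
  have "A \<in> lmeasurable"
    using fmeasurableI2[OF S A(2) A(1)] .
  moreover have "T \<inter> S \<in> sets lebesgue"
    using T(1) S by (simp add: borel_open sets.Int)
  ultimately have "measure lebesgue (T \<inter> S) \<le> measure lebesgue (A \<union> (T - A))"
    using T(3) fmeasurable.Un[OF \<open>A \<in> lmeasurable\<close> T(3)] by (intro measure_mono_fmeasurable) auto
  also have "\<dots> \<le> measure lebesgue A + measure lebesgue (T - A)"
    using T(3) \<open>A \<in> lmeasurable\<close> by (intro measure_Un_le) auto
  also have "\<dots> \<le> measure lebesgue A + e"
    using T(3,4) \<open>e > 0\<close> by (simp add: emeasure_eq_measure2 ennreal_less_iff)
  finally show thesis
    by (rule that[OF T(1,2)])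
qed

text \<open>An almost optimal cover is thickened to open sets of almost the same measure.\<close>
lemma cover_m_less_open_nhd:
  assumes "L \<subseteq> {0..1} \<times> {0..1}" "cover_m L < c"
  obtains W where "open W" "L \<subseteq> W"
    "\<And>L'. L' \<subseteq> {0..1} \<times> {0..1} \<Longrightarrow> L' \<subseteq> W \<Longrightarrow> cover_m L' < c"
proof -
  obtain A B where AB: "covers L A B" "measure lebesgue A + measure lebesgue B < c"
    using cover_m_lessE[OF assms] by blast
  define e where "e = (c - (measure lebesgue A + measure lebesgue B)) / 3"
  have "e > 0" and e3: "3 * e = c - (measure lebesgue A + measure lebesgue B)"
    using AB(2) by (simp_all add: e_def)
  have unit: "{0..1::real} \<in> lmeasurable"
    by simp
  obtain U where U: "open U" "A \<subseteq> U" "measure lebesgue (U \<inter> {0..1}) \<le> measure lebesgue A + e"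
    using lmeasurable_outer_open_Int[OF _ _ unit \<open>e > 0\<close>, of A] AB(1) unfolding covers_def by blast
  obtain V where V: "open V" "B \<subseteq> V" "measure lebesgue (V \<inter> {0..1}) \<le> measure lebesgue B + e"
    using lmeasurable_outer_open_Int[OF _ _ unit \<open>e > 0\<close>, of B] AB(1) unfolding covers_def by blast
  show thesis
  proof (rule that)
    show "open (U \<times> UNIV \<union> UNIV \<times> V)"
      using U(1) V(1) by (intro open_Un open_Times) auto
    show "L \<subseteq> U \<times> UNIV \<union> UNIV \<times> V"
      using AB(1) U(2) V(2) unfolding covers_def by blast
    fix L' assume "L' \<subseteq> {0..1} \<times> {0..1}" "L' \<subseteq> U \<times> UNIV \<union> UNIV \<times> V"
    moreover have "U \<inter> {0..1} \<in> sets lebesgue" "V \<inter> {0..1} \<in> sets lebesgue"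
      using U(1) V(1) by (simp_all add: borel_open sets.Int)
    ultimately have "covers L' (U \<inter> {0..1}) (V \<inter> {0..1})"
      unfolding covers_def by blast
    from cover_m_le[OF this] show "cover_m L' < c"
      using U(3) V(3) e3 \<open>e > 0\<close> by linarith
  qed
qed

section \<open>Fractional covers\<close>

abbreviation Leb01 :: "real measure" where
  "Leb01 \<equiv> lebesgue_on {0..1}"

interpretation Leb01: finite_measure Leb01
  by (rule finite_measure_lebesgue_on) simp

lemma measure_Leb01_space [simp]: "measure Leb01 {0..1} = 1"
  by (simp add: measure_restrict_space)

lemma integral_indicator_Leb01:
  "A \<in> sets lebesgue \<Longrightarrow> A \<subseteq> {0..1} \<Longrightarrow> integral\<^sup>L Leb01 (indicator A) = measure lebesgue A"
  by (simp add: Int_absorb2 measure_restrict_space)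

lemma integrable_Leb01_bounded:
  fixes f :: "real \<Rightarrow> real"
  assumes "f \<in> borel_measurable Leb01" "\<And>x. x \<in> {0..1} \<Longrightarrow> \<bar>f x\<bar> \<le> B"
  shows "integrable Leb01 f"
  by (rule Leb01.integrable_const_bound[of _ B]) (use assms in auto)

definition unit_valued :: "(real \<Rightarrow> real) \<Rightarrow> bool" where
  "unit_valued u \<longleftrightarrow> u \<in> borel_measurable Leb01 \<and> (\<forall>x\<in>{0..1}. 0 \<le> u x \<and> u x \<le> 1)"

lemma unit_valuedD:
  assumes "unit_valued u"
  shows "u \<in> borel_measurable Leb01" "x \<in> {0..1} \<Longrightarrow> 0 \<le> u x" "x \<in> {0..1} \<Longrightarrow> u x \<le> 1"
  using assms by (auto simp: unit_valued_def)

lemma unit_valued_indicator: "A \<in> sets lebesgue \<Longrightarrow> A \<subseteq> {0..1} \<Longrightarrow> unit_valued (indicator A)"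
  by (auto simp: unit_valued_def sets_restrict_space_iff intro!: borel_measurable_indicator)

lemma unit_valued_midpoint:
  assumes "unit_valued u" "unit_valued v"
  shows "unit_valued (\<lambda>x. (u x + v x) / 2)"
  unfolding unit_valued_def
proof (intro conjI ballI)
  show "(\<lambda>x. (u x + v x) / 2) \<in> borel_measurable Leb01"
    using unit_valuedD(1)[OF assms(1)] unit_valuedD(1)[OF assms(2)] by simp
  fix x :: real assume "x \<in> {0..1}"
  then show "0 \<le> (u x + v x) / 2" "(u x + v x) / 2 \<le> 1"
    using unit_valuedD(2,3)[OF assms(1) \<open>x \<in> {0..1}\<close>] unit_valuedD(2,3)[OF assms(2) \<open>x \<in> {0..1}\<close>]
    by simp_all
qed

lemma unit_valued_integrable:
  assumes "unit_valued u"
  shows "integrable Leb01 u" "integrable Leb01 (\<lambda>x. (u x)\<^sup>2)"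
proof -
  have "\<bar>u x\<bar> \<le> 1" if "x \<in> {0..1}" for x
    using unit_valuedD(2,3)[OF assms that] by simp
  then show "integrable Leb01 u" "integrable Leb01 (\<lambda>x. (u x)\<^sup>2)"
    using unit_valuedD(1)[OF assms]
    by (auto simp: abs_square_le_1 intro!: integrable_Leb01_bounded[of _ 1])
qed

lemma unit_valued_diff_integrable:
  assumes "unit_valued u" "unit_valued v"
  shows "integrable Leb01 (\<lambda>x. \<bar>u x - v x\<bar>)" "integrable Leb01 (\<lambda>x. (u x - v x)\<^sup>2)"
proof -
  have "\<bar>u x - v x\<bar> \<le> 1" if "x \<in> {0..1}" for x
    using unit_valuedD(2,3)[OF assms(1) that] unit_valuedD(2,3)[OF assms(2) that] by linarith
  then show "integrable Leb01 (\<lambda>x. \<bar>u x - v x\<bar>)" "integrable Leb01 (\<lambda>x. (u x - v x)\<^sup>2)"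
    using unit_valuedD(1)[OF assms(1)] unit_valuedD(1)[OF assms(2)]
    by (auto simp: abs_square_le_1 intro!: integrable_Leb01_bounded[of _ 1])
qed

lemma unit_valued_integral_bounds:
  assumes "unit_valued u"
  shows "0 \<le> integral\<^sup>L Leb01 u" "integral\<^sup>L Leb01 (\<lambda>x. (u x)\<^sup>2) \<le> 1"
proof -
  show "0 \<le> integral\<^sup>L Leb01 u"
    using unit_valuedD(2)[OF assms] by (intro Bochner_Integration.integral_nonneg) simp
  have "integral\<^sup>L Leb01 (\<lambda>x. (u x)\<^sup>2) \<le> integral\<^sup>L Leb01 (\<lambda>x. 1)"
    using unit_valuedD(2,3)[OF assms]
    by (intro integral_mono unit_valued_integrable[OF assms]) (auto simp: power_le_one)
  then show "integral\<^sup>L Leb01 (\<lambda>x. (u x)\<^sup>2) \<le> 1"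
    by simp
qed

definition fractional_cover :: "(real \<times> real) set \<Rightarrow> (real \<Rightarrow> real) \<Rightarrow> (real \<Rightarrow> real) \<Rightarrow> bool" where
  "fractional_cover L u v \<longleftrightarrow> unit_valued u \<and> unit_valued v \<and> (\<forall>(x, y)\<in>L. 1 \<le> u x + v y)"

lemma covers_imp_fractional_cover:
  assumes "covers L A B"
  shows "fractional_cover L (indicator A) (indicator B)"
  using assms unfolding covers_def fractional_cover_def
  by (auto simp: unit_valued_indicator indicator_def)

lemma card_nat_in_interval_le:
  fixes a t :: real
  assumes "0 \<le> a" "0 \<le> t"
  shows "real (card {i\<in>I. a < real i \<and> real i \<le> a + t}) \<le> t + 1"
proof -
  have "i \<in> {nat \<lfloor>a\<rfloor> + 1 .. nat \<lfloor>a + t\<rfloor>}" if "a < real i" "real i \<le> a + t" for i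
  proof -
    have "\<lfloor>a\<rfloor> < int i"
      using of_int_floor_le[of a] that(1) by linarith
    moreover have "int i \<le> \<lfloor>a + t\<rfloor>"
      using that(2) by (simp add: le_floor_iff)
    ultimately show ?thesis
      using assms(1) by (auto simp: Suc_le_eq nat_less_iff le_nat_iff)
  qed
  then have "{i\<in>I. a < real i \<and> real i \<le> a + t} \<subseteq> {nat \<lfloor>a\<rfloor> + 1 .. nat \<lfloor>a + t\<rfloor>}"
    by blast
  then have "card {i\<in>I. a < real i \<and> real i \<le> a + t} \<le> nat \<lfloor>a + t\<rfloor> - nat \<lfloor>a\<rfloor>"
    using card_mono[of "{nat \<lfloor>a\<rfloor> + 1 .. nat \<lfloor>a + t\<rfloor>}"] by fastforce
  then show ?thesis
    using assms by linarith
qed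

lemma card_thresholds_le:
  fixes s :: real
  assumes "0 < N" "0 \<le> s" "s \<le> 1"
  shows "real (card {i\<in>{1..N}. real i / real N \<le> s}) \<le> real N * s + 1"
    and "real (card {i\<in>{1..N}. 1 - real i / real N < s}) \<le> real N * s + 1"
proof -
  have "{i\<in>{1..N}. real i / real N \<le> s} = {i\<in>{1..N}. 0 < real i \<and> real i \<le> 0 + real N * s}"
    using assms(1) by (auto simp: field_simps)
  moreover have "real (card {i\<in>{1..N}. 0 < real i \<and> real i \<le> 0 + real N * s}) \<le> real N * s + 1"
    using assms(2) by (intro card_nat_in_interval_le) auto
  ultimately show "real (card {i\<in>{1..N}. real i / real N \<le> s}) \<le> real N * s + 1"
    by (simp only:)
  have "{i\<in>{1..N}. 1 - real i / real N < s}
      = {i\<in>{1..N}. real N - real N * s < real i \<and> real i \<le> real N - real N * s + real N * s}"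
    using assms(1) by (auto simp: field_simps)
  moreover have "real (card {i\<in>{1..N}. real N - real N * s < real i \<and> real i \<le> real N - real N * s + real N * s})
      \<le> real N * s + 1"
    using assms(2,3) by (intro card_nat_in_interval_le) (auto simp: mult_left_le)
  ultimately show "real (card {i\<in>{1..N}. 1 - real i / real N < s}) \<le> real N * s + 1"
    by (simp only:)
qed

lemma threshold_covers:
  assumes L: "L \<subseteq> {0..1} \<times> {0..1}" and uv: "fractional_cover L u v"
  shows "covers L {x\<in>{0..1}. t \<le> u x} {y\<in>{0..1}. 1 - t < v y}"
proof -
  have u: "unit_valued u" and v: "unit_valued v" and uv1: "\<And>x y. (x, y) \<in> L \<Longrightarrow> 1 \<le> u x + v y"
    using uv by (auto simp: fractional_cover_def)
  have "{x\<in>{0..1}. t \<le> u x} = u -` {t..} \<inter> space Leb01"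
    by auto
  then have "{x\<in>{0..1}. t \<le> u x} \<in> sets Leb01"
    using measurable_sets[OF unit_valuedD(1)[OF u]] by simp
  moreover have "{y\<in>{0..1}. 1 - t < v y} = v -` {1 - t<..} \<inter> space Leb01"
    by auto
  then have "{y\<in>{0..1}. 1 - t < v y} \<in> sets Leb01"
    using measurable_sets[OF unit_valuedD(1)[OF v]] by simp
  moreover have "L \<subseteq> {x\<in>{0..1}. t \<le> u x} \<times> {0..1} \<union> {0..1} \<times> {y\<in>{0..1}. 1 - t < v y}"
  proof
    fix p assume "p \<in> L"
    then obtain x y where p: "p = (x, y)" "x \<in> {0..1}" "y \<in> {0..1}" and "1 \<le> u x + v y"
      using L uv1 by force
    then show "p \<in> {x\<in>{0..1}. t \<le> u x} \<times> {0..1} \<union> {0..1} \<times> {y\<in>{0..1}. 1 - t < v y}"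
      by auto
  qed
  ultimately show ?thesis
    by (auto simp: covers_def sets_restrict_space_iff)
qed

text \<open>Discretised layer-cake argument: averaging the threshold covers for \<open>t = i/N\<close> over
  \<open>i = 1, \<dots>, N\<close> costs at most \<open>\<integral>u + \<integral>v + 2/N\<close>.\<close>
lemma cover_m_le_fractional_cover:
  assumes L: "L \<subseteq> {0..1} \<times> {0..1}" and uv: "fractional_cover L u v"
  shows "cover_m L \<le> integral\<^sup>L Leb01 u + integral\<^sup>L Leb01 v"
proof (rule field_le_epsilon)
  fix e :: real assume "e > 0"
  obtain N :: nat where N: "N > 0" "2 / real N < e"
    using ex_inverse_of_nat_less[of "e / 2"] \<open>e > 0\<close> by (auto simp: field_simps)
  have u: "unit_valued u" and v: "unit_valued v"
    using uv by (auto simp: fractional_cover_def)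
  define A where "A i = {x\<in>{0..1}. real i / real N \<le> u x}" for i :: nat
  define B where "B i = {y\<in>{0..1}. 1 - real i / real N < v y}" for i :: nat
  have AB: "covers L (A i) (B i)" for i
    unfolding A_def B_def by (rule threshold_covers[OF L uv])
  then have AB_leb: "A i \<in> sets lebesgue" "A i \<subseteq> {0..1}" "B i \<in> sets lebesgue" "B i \<subseteq> {0..1}" for i
    by (simp_all add: covers_def)
  have "unit_valued (indicator (A i))" "unit_valued (indicator (B i))" for i
    using AB_leb by (simp_all add: unit_valued_indicator)
  note ind_int = unit_valued_integrable(1)[OF this(1)] unit_valued_integrable(1)[OF this(2)]
  have "real N * cover_m L \<le> (\<Sum>i\<in>{1..N}. measure lebesgue (A i) + measure lebesgue (B i))"
    using sum_mono[of "{1..N}" "\<lambda>_. cover_m L"] cover_m_le[OF AB] by simp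
  also have "\<dots> = (\<Sum>i\<in>{1..N}. integral\<^sup>L Leb01 (indicator (A i)) + integral\<^sup>L Leb01 (indicator (B i)))"
    by (simp only: integral_indicator_Leb01 AB_leb)
  also have "\<dots> = integral\<^sup>L Leb01 (\<lambda>x. \<Sum>i\<in>{1..N}. indicator (A i) x + indicator (B i) x)"
    using ind_int by (simp add: integral_sum[where f = "\<lambda>i x. indicator (A i) x + indicator (B i) x"] integral_add)
  also have "\<dots> \<le> integral\<^sup>L Leb01 (\<lambda>x. real N * u x + real N * v x + 2)"
  proof (rule integral_mono)
    show "integrable Leb01 (\<lambda>x. \<Sum>i\<in>{1..N}. indicator (A i) x + indicator (B i) x :: real)"
      using ind_int by auto
    show "integrable Leb01 (\<lambda>x. real N * u x + real N * v x + 2)"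
      using unit_valued_integrable[OF u] unit_valued_integrable[OF v] by auto
    fix x assume "x \<in> space Leb01"
    then have x: "x \<in> {0..1}"
      by simp
    have "(\<Sum>i\<in>{1..N}. indicator (A i) x :: real) = card {i\<in>{1..N}. real i / real N \<le> u x}"
      "(\<Sum>i\<in>{1..N}. indicator (B i) x :: real) = card {i\<in>{1..N}. 1 - real i / real N < v x}"
      using x by (simp_all add: A_def B_def indicator_def sum.If_cases Int_def)
    then show "(\<Sum>i\<in>{1..N}. indicator (A i) x + indicator (B i) x) \<le> real N * u x + real N * v x + 2"
      using card_thresholds_le[OF N(1) unit_valuedD(2,3)[OF u x]] card_thresholds_le[OF N(1) unit_valuedD(2,3)[OF v x]]
      by (simp add: sum.distrib)
  qed
  also have "\<dots> = real N * (integral\<^sup>L Leb01 u + integral\<^sup>L Leb01 v) + 2"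
    using unit_valued_integrable[OF u] unit_valued_integrable[OF v] by (simp add: distrib_left)
  finally have "cover_m L \<le> integral\<^sup>L Leb01 u + integral\<^sup>L Leb01 v + 2 / real N"
    using N(1) by (simp add: field_simps)
  then show "cover_m L \<le> integral\<^sup>L Leb01 u + integral\<^sup>L Leb01 v + e"
    using N(2) by linarith
qed

lemma fractional_cover_subset:
  "fractional_cover L' u v \<Longrightarrow> L \<subseteq> L' \<Longrightarrow> fractional_cover L u v"
  by (auto simp: fractional_cover_def)

lemma fractional_cover_midpoint:
  assumes "fractional_cover L u v" "fractional_cover L u' v'"
  shows "fractional_cover L (\<lambda>x. (u x + u' x) / 2) (\<lambda>y. (v y + v' y) / 2)"
proof -
  have "1 \<le> (u x + u' x) / 2 + (v y + v' y) / 2" if "(x, y) \<in> L" for x y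
  proof -
    have "1 \<le> u x + v y" "1 \<le> u' x + v' y"
      using assms that by (auto simp: fractional_cover_def)
    then show ?thesis
      by argo
  qed
  then show ?thesis
    using assms by (auto simp: fractional_cover_def unit_valued_midpoint)
qed

lemma integral_midpoint_Leb01:
  assumes "unit_valued u" "unit_valued v"
  shows "integral\<^sup>L Leb01 (\<lambda>x. (u x + v x) / 2) = (integral\<^sup>L Leb01 u + integral\<^sup>L Leb01 v) / 2"
  using unit_valued_integrable(1)[OF assms(1)] unit_valued_integrable(1)[OF assms(2)] by simp

lemma integral_parallelogram_Leb01:
  assumes "unit_valued u" "unit_valued v"
  shows "integral\<^sup>L Leb01 (\<lambda>x. (u x - v x)\<^sup>2) =
    2 * integral\<^sup>L Leb01 (\<lambda>x. (u x)\<^sup>2) + 2 * integral\<^sup>L Leb01 (\<lambda>x. (v x)\<^sup>2)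
      - 4 * integral\<^sup>L Leb01 (\<lambda>x. ((u x + v x) / 2)\<^sup>2)"
proof -
  have "(\<lambda>x. (u x - v x)\<^sup>2) = (\<lambda>x. 2 * (u x)\<^sup>2 + 2 * (v x)\<^sup>2 - 4 * ((u x + v x) / 2)\<^sup>2)"
    by (rule ext) (simp add: power2_eq_square field_simps)
  then show ?thesis
    using unit_valued_integrable(2)[OF assms(1)] unit_valued_integrable(2)[OF assms(2)]
      unit_valued_integrable(2)[OF unit_valued_midpoint[OF assms]]
    by simp
qed

lemma integral_abs_le_of_integral_square_le:
  fixes f :: "real \<Rightarrow> real"
  assumes f: "integrable Leb01 f" "integrable Leb01 (\<lambda>x. (f x)\<^sup>2)"
    and d: "0 < d" "integral\<^sup>L Leb01 (\<lambda>x. (f x)\<^sup>2) \<le> d\<^sup>2"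
  shows "integral\<^sup>L Leb01 (\<lambda>x. \<bar>f x\<bar>) \<le> d"
proof -
  have "integral\<^sup>L Leb01 (\<lambda>x. \<bar>f x\<bar>) \<le> integral\<^sup>L Leb01 (\<lambda>x. d / 2 + (f x)\<^sup>2 / (2 * d))"
  proof (rule integral_mono)
    show "integrable Leb01 (\<lambda>x. \<bar>f x\<bar>)" "integrable Leb01 (\<lambda>x. d / 2 + (f x)\<^sup>2 / (2 * d))"
      using f by auto
    fix x
    have "2 * d * \<bar>f x\<bar> \<le> d\<^sup>2 + (f x)\<^sup>2"
      using sum_squares_bound[of d "\<bar>f x\<bar>"] by (simp add: power2_eq_square)
    then show "\<bar>f x\<bar> \<le> d / 2 + (f x)\<^sup>2 / (2 * d)"
      using d(1) by (simp add: field_simps power2_eq_square)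
  qed
  also have "\<dots> = d / 2 + integral\<^sup>L Leb01 (\<lambda>x. (f x)\<^sup>2) / (2 * d)"
    using f by simp
  also have "\<dots> \<le> d"
    using d by (simp add: field_simps power2_eq_square)
  finally show ?thesis .
qed

lemma Cauchy_subseq_geometric_steps:
  fixes d :: "nat \<Rightarrow> nat \<Rightarrow> real"
  assumes "\<And>e. 0 < e \<Longrightarrow> \<exists>N. \<forall>n m. N \<le> n \<longrightarrow> n \<le> m \<longrightarrow> d n m \<le> e"
  obtains s where "strict_mono s" "\<And>j. d (s j) (s (Suc j)) \<le> (1/2) ^ j"
proof -
  have "\<forall>j. \<exists>N. \<forall>n m. N \<le> n \<longrightarrow> n \<le> m \<longrightarrow> d n m \<le> (1/2) ^ j"
    using assms by simp
  then obtain N where N: "\<And>j n m. N j \<le> n \<Longrightarrow> n \<le> m \<Longrightarrow> d n m \<le> (1/2) ^ j"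
    by metis
  define s where "s = rec_nat (N 0) (\<lambda>j sj. max (Suc sj) (N (Suc j)))"
  have s_Suc: "s (Suc j) = max (Suc (s j)) (N (Suc j))" for j
    by (simp add: s_def)
  have "N j \<le> s j" for j
    by (cases j) (simp_all add: s_def)
  moreover have "strict_mono s"
    by (rule strict_monoI_Suc) (simp add: s_Suc)
  ultimately show thesis
    using N s_Suc by (intro that) auto
qed

lemma le_first_plus_sum_abs_increments:
  fixes a :: "nat \<Rightarrow> real"
  shows "a i \<le> a 0 + (\<Sum>t<i. \<bar>a (Suc t) - a t\<bar>)"
  by (induction i) auto

text \<open>The series is summed in \<open>ennreal\<close> because it may diverge at individual points.\<close>
definition capped_variation :: "(nat \<Rightarrow> real \<Rightarrow> real) \<Rightarrow> real \<Rightarrow> real" where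
  "capped_variation U x = enn2real (min 1 (ennreal (U 0 x) + (\<Sum>i. ennreal \<bar>U (Suc i) x - U i x\<bar>)))"

lemma capped_variation_bounds: "0 \<le> capped_variation U x" "capped_variation U x \<le> 1"
  unfolding capped_variation_def
  by (simp, metis enn2real_1 enn2real_mono ennreal_one_less_top min.cobounded1)

lemma ennreal_capped_variation:
  "ennreal (capped_variation U x) = min 1 (ennreal (U 0 x) + (\<Sum>i. ennreal \<bar>U (Suc i) x - U i x\<bar>))"
  by (simp add: capped_variation_def min_less_iff_disj ennreal_enn2real)

lemma unit_valued_capped_variation:
  assumes "\<And>j. unit_valued (U j)"
  shows "unit_valued (capped_variation U)"
proof -
  have [measurable]: "U j \<in> borel_measurable Leb01" for j
    using unit_valuedD(1)[OF assms] .
  have "capped_variation U \<in> borel_measurable Leb01"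
    unfolding capped_variation_def[abs_def] by measurable
  then show ?thesis
    by (simp add: unit_valued_def capped_variation_bounds)
qed

lemma capped_variation_ge:
  assumes U: "\<And>j. unit_valued (U j)" and x: "x \<in> {0..1}"
  shows "U i x \<le> capped_variation U x"
proof -
  have U_nonneg: "0 \<le> U t x" for t
    using unit_valuedD(2)[OF U x] .
  have "ennreal (U i x) \<le> ennreal (U 0 x + (\<Sum>t<i. \<bar>U (Suc t) x - U t x\<bar>))"
    by (rule ennreal_leI[OF le_first_plus_sum_abs_increments])
  also have "\<dots> = ennreal (U 0 x) + (\<Sum>t<i. ennreal \<bar>U (Suc t) x - U t x\<bar>)"
    using U_nonneg by (simp add: ennreal_plus sum_nonneg sum_ennreal)
  also have "\<dots> \<le> ennreal (U 0 x) + (\<Sum>t. ennreal \<bar>U (Suc t) x - U t x\<bar>)"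
    by (intro add_left_mono sum_le_suminf) auto
  finally have "ennreal (U i x) \<le> ennreal (capped_variation U x)"
    using unit_valuedD(3)[OF U x, of i] by (simp add: ennreal_capped_variation ennreal_le_1)
  then show ?thesis
    by (simp add: ennreal_le_iff capped_variation_bounds)
qed

lemma integral_capped_variation_le:
  assumes U: "\<And>j. unit_valued (U j)"
    and summable: "summable (\<lambda>i. integral\<^sup>L Leb01 (\<lambda>x. \<bar>U (Suc i) x - U i x\<bar>))"
  shows "integral\<^sup>L Leb01 (capped_variation U)
    \<le> integral\<^sup>L Leb01 (U 0) + (\<Sum>i. integral\<^sup>L Leb01 (\<lambda>x. \<bar>U (Suc i) x - U i x\<bar>))"
proof -
  let ?d = "\<lambda>i x. \<bar>U (Suc i) x - U i x\<bar>"
  have [measurable]: "U j \<in> borel_measurable Leb01" for j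
    using unit_valuedD(1)[OF U] .
  have d_nonneg: "0 \<le> integral\<^sup>L Leb01 (?d i)" for i
    by simp
  have "ennreal (integral\<^sup>L Leb01 (capped_variation U)) = (\<integral>\<^sup>+x. ennreal (capped_variation U x) \<partial>Leb01)"
    using unit_valued_capped_variation[OF U] unit_valued_integrable(1) unit_valuedD(2)
    by (intro nn_integral_eq_integral[symmetric]) (auto intro: AE_I2)
  also have "\<dots> \<le> (\<integral>\<^sup>+x. ennreal (U 0 x) + (\<Sum>i. ennreal (?d i x)) \<partial>Leb01)"
    by (intro nn_integral_mono) (simp add: ennreal_capped_variation)
  also have "\<dots> = (\<integral>\<^sup>+x. ennreal (U 0 x) \<partial>Leb01) + (\<integral>\<^sup>+x. (\<Sum>i. ennreal (?d i x)) \<partial>Leb01)"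
    by (rule nn_integral_add) auto
  also have "(\<integral>\<^sup>+x. (\<Sum>i. ennreal (?d i x)) \<partial>Leb01) = (\<Sum>i. \<integral>\<^sup>+x. ennreal (?d i x) \<partial>Leb01)"
    by (rule nn_integral_suminf) auto
  also have "(\<integral>\<^sup>+x. ennreal (U 0 x) \<partial>Leb01) = ennreal (integral\<^sup>L Leb01 (U 0))"
    using unit_valuedD(2)[OF U] by (intro nn_integral_eq_integral unit_valued_integrable(1)[OF U] AE_I2) simp
  also have "(\<lambda>i. \<integral>\<^sup>+x. ennreal (?d i x) \<partial>Leb01) = (\<lambda>i. ennreal (integral\<^sup>L Leb01 (?d i)))"
    by (intro ext nn_integral_eq_integral unit_valued_diff_integrable(1)[OF U U]) simp
  also have "(\<Sum>i. ennreal (integral\<^sup>L Leb01 (?d i))) = ennreal (\<Sum>i. integral\<^sup>L Leb01 (?d i))"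
    by (rule suminf_ennreal2[OF d_nonneg summable])
  also have "ennreal (integral\<^sup>L Leb01 (U 0)) + ennreal (\<Sum>i. integral\<^sup>L Leb01 (?d i))
      = ennreal (integral\<^sup>L Leb01 (U 0) + (\<Sum>i. integral\<^sup>L Leb01 (?d i)))"
    using unit_valued_integral_bounds(1)[OF U] suminf_nonneg[OF summable d_nonneg] by (rule ennreal_plus[symmetric])
  finally show ?thesis
    using unit_valued_integral_bounds(1)[OF U] suminf_nonneg[OF summable d_nonneg]
    by (subst (asm) ennreal_le_iff) auto
qed

section \<open>Continuity from below\<close>

locale cover_m_chain =
  fixes L :: "nat \<Rightarrow> (real \<times> real) set" and c :: real
  assumes incseq: "incseq L"
    and unit_square: "\<And>k. L k \<subseteq> {0..1} \<times> {0..1}"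
    and cover_m_bound: "\<And>k. cover_m (L k) \<le> c"
begin

definition admissible :: "nat \<Rightarrow> ((real \<Rightarrow> real) \<times> (real \<Rightarrow> real)) set" where
  "admissible n = {(u, v). fractional_cover (L n) u v \<and>
      integral\<^sup>L Leb01 u + integral\<^sup>L Leb01 v \<le> c + inverse (real (Suc n))}"

definition energy :: "(real \<Rightarrow> real) \<times> (real \<Rightarrow> real) \<Rightarrow> real" where
  "energy p = integral\<^sup>L Leb01 (\<lambda>x. (fst p x)\<^sup>2) + integral\<^sup>L Leb01 (\<lambda>x. (snd p x)\<^sup>2)"

definition min_energy :: "nat \<Rightarrow> real" where
  "min_energy n = Inf (energy ` admissible n)"

definition midpoint_pair ::
    "(real \<Rightarrow> real) \<times> (real \<Rightarrow> real) \<Rightarrow> (real \<Rightarrow> real) \<times> (real \<Rightarrow> real) \<Rightarrow> (real \<Rightarrow> real) \<times> (real \<Rightarrow> real)"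
  where
  "midpoint_pair p q = ((\<lambda>x. (fst p x + fst q x) / 2), (\<lambda>y. (snd p y + snd q y) / 2))"

lemma admissibleD:
  assumes "p \<in> admissible n"
  shows "fractional_cover (L n) (fst p) (snd p)" "unit_valued (fst p)" "unit_valued (snd p)"
    "integral\<^sup>L Leb01 (fst p) + integral\<^sup>L Leb01 (snd p) \<le> c + inverse (real (Suc n))"
  using assms by (auto simp: admissible_def fractional_cover_def)

lemma admissible_nonempty: "admissible n \<noteq> {}"
proof -
  have "0 < inverse (real (Suc n))"
    by simp
  then have "cover_m (L n) < c + inverse (real (Suc n))"
    using cover_m_bound[of n] by linarith
  then obtain A B where AB: "covers (L n) A B" "measure lebesgue A + measure lebesgue B < c + inverse (real (Suc n))"
    using cover_m_lessE[OF unit_square] by blast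
  then have "integral\<^sup>L Leb01 (indicator A) + integral\<^sup>L Leb01 (indicator B) \<le> c + inverse (real (Suc n))"
    by (auto simp only: covers_def integral_indicator_Leb01)
  with AB(1) have "(indicator A, indicator B) \<in> admissible n"
    by (simp add: admissible_def covers_imp_fractional_cover)
  then show ?thesis
    by blast
qed

lemma admissible_antimono: "n \<le> m \<Longrightarrow> admissible m \<subseteq> admissible n"
proof
  fix p assume "n \<le> m" and p: "p \<in> admissible m"
  have "L n \<subseteq> L m"
    using incseq \<open>n \<le> m\<close> by (rule incseqD)
  then have "fractional_cover (L n) (fst p) (snd p)"
    using admissibleD(1)[OF p] by (rule fractional_cover_subset[rotated])
  moreover have "inverse (real (Suc m)) \<le> inverse (real (Suc n))"
    using \<open>n \<le> m\<close> by simp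
  then have "integral\<^sup>L Leb01 (fst p) + integral\<^sup>L Leb01 (snd p) \<le> c + inverse (real (Suc n))"
    using admissibleD(4)[OF p] by linarith
  ultimately show "p \<in> admissible n"
    by (simp add: admissible_def case_prod_beta)
qed

lemma admissible_midpoint:
  assumes "p \<in> admissible n" "q \<in> admissible n"
  shows "midpoint_pair p q \<in> admissible n"
proof -
  note p = admissibleD[OF assms(1)] and q = admissibleD[OF assms(2)]
  have "fractional_cover (L n) (fst (midpoint_pair p q)) (snd (midpoint_pair p q))"
    using fractional_cover_midpoint[OF p(1) q(1)] by (simp add: midpoint_pair_def)
  moreover have "integral\<^sup>L Leb01 (fst (midpoint_pair p q)) = (integral\<^sup>L Leb01 (fst p) + integral\<^sup>L Leb01 (fst q)) / 2"
    "integral\<^sup>L Leb01 (snd (midpoint_pair p q)) = (integral\<^sup>L Leb01 (snd p) + integral\<^sup>L Leb01 (snd q)) / 2"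
    unfolding midpoint_pair_def fst_conv snd_conv
    by (rule integral_midpoint_Leb01[OF p(2) q(2)], rule integral_midpoint_Leb01[OF p(3) q(3)])
  then have "integral\<^sup>L Leb01 (fst (midpoint_pair p q)) + integral\<^sup>L Leb01 (snd (midpoint_pair p q))
      \<le> c + inverse (real (Suc n))"
    using p(4) q(4) by argo
  ultimately show ?thesis
    by (simp add: admissible_def case_prod_beta)
qed

lemma energy_bounds: "p \<in> admissible n \<Longrightarrow> 0 \<le> energy p \<and> energy p \<le> 2"
  using unit_valued_integral_bounds(2)[OF admissibleD(2)] unit_valued_integral_bounds(2)[OF admissibleD(3)]
  by (fastforce simp: energy_def)

lemma min_energy_le: "p \<in> admissible n \<Longrightarrow> min_energy n \<le> energy p"
  unfolding min_energy_def using energy_bounds by (intro cInf_lower bdd_belowI[of _ 0]) auto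

lemma min_energy_le_2: "min_energy n \<le> 2"
  using admissible_nonempty min_energy_le energy_bounds by (meson ex_in_conv order.trans)

lemma incseq_min_energy: "incseq min_energy"
  unfolding incseq_def min_energy_def using admissible_antimono admissible_nonempty energy_bounds
  by (intro allI impI cInf_superset_mono bdd_belowI[of _ 0]) auto

definition near_min :: "nat \<Rightarrow> (real \<Rightarrow> real) \<times> (real \<Rightarrow> real)" where
  "near_min n = (SOME p. p \<in> admissible n \<and> energy p < min_energy n + inverse (real (Suc n)))"

lemma near_min: "near_min n \<in> admissible n" "energy (near_min n) < min_energy n + inverse (real (Suc n))"
proof -
  have "\<exists>p\<in>admissible n. energy p < min_energy n + inverse (real (Suc n))"
    using cInf_lessD[of "energy ` admissible n" "min_energy n + inverse (real (Suc n))"] admissible_nonempty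
    by (auto simp: min_energy_def)
  then show "near_min n \<in> admissible n" "energy (near_min n) < min_energy n + inverse (real (Suc n))"
    unfolding near_min_def by (metis (mono_tags, lifting) someI_ex)+
qed

lemma near_min_unit_valued: "unit_valued (fst (near_min n))" "unit_valued (snd (near_min n))"
  using admissibleD(2,3)[OF near_min(1)] .

text \<open>Parallelogram law: the midpoint of two near minimisers is admissible, so it cannot have much
  smaller energy than either of them.\<close>
lemma near_min_square_dist:
  assumes "n \<le> m"
  shows "integral\<^sup>L Leb01 (\<lambda>x. (fst (near_min n) x - fst (near_min m) x)\<^sup>2)
      + integral\<^sup>L Leb01 (\<lambda>x. (snd (near_min n) x - snd (near_min m) x)\<^sup>2)
    \<le> 2 * (min_energy m - min_energy n) + 4 * inverse (real (Suc n))"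
proof -
  have "near_min m \<in> admissible n"
    using near_min(1) admissible_antimono[OF assms] by blast
  then have "min_energy n \<le> energy (midpoint_pair (near_min n) (near_min m))"
    by (intro min_energy_le admissible_midpoint near_min(1))
  moreover have "inverse (real (Suc m)) \<le> inverse (real (Suc n))"
    using assms by simp
  ultimately show ?thesis
    using near_min(2)[of n] near_min(2)[of m]
      integral_parallelogram_Leb01[OF near_min_unit_valued(1)[of n] near_min_unit_valued(1)[of m]]
      integral_parallelogram_Leb01[OF near_min_unit_valued(2)[of n] near_min_unit_valued(2)[of m]]
    unfolding energy_def midpoint_pair_def fst_conv snd_conv by argo
qed

definition l1_dist :: "nat \<Rightarrow> nat \<Rightarrow> real" where
  "l1_dist n m = integral\<^sup>L Leb01 (\<lambda>x. \<bar>fst (near_min n) x - fst (near_min m) x\<bar>)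
    + integral\<^sup>L Leb01 (\<lambda>x. \<bar>snd (near_min n) x - snd (near_min m) x\<bar>)"

lemma l1_dist_Cauchy:
  assumes "0 < e"
  shows "\<exists>N. \<forall>n m. N \<le> n \<longrightarrow> n \<le> m \<longrightarrow> l1_dist n m \<le> e"
proof -
  define d where "d = e / 2"
  have "0 < d"
    using assms by (simp add: d_def)
  have "\<forall>n. min_energy n \<le> 2"
    using min_energy_le_2 by blast
  then have "convergent min_energy"
    using incseq_convergent[OF incseq_min_energy] unfolding convergent_def by metis
  then obtain N1 where N1: "\<And>m n. N1 \<le> m \<Longrightarrow> N1 \<le> n \<Longrightarrow> \<bar>min_energy m - min_energy n\<bar> < d\<^sup>2 / 4"
    using CauchyD[OF convergent_Cauchy, of min_energy "d\<^sup>2 / 4"] \<open>0 < d\<close> by auto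
  obtain N2 where N2: "inverse (real (Suc N2)) < d\<^sup>2 / 8"
    using reals_Archimedean[of "d\<^sup>2 / 8"] \<open>0 < d\<close> by auto
  show ?thesis
  proof (intro exI[of _ "max N1 N2"] allI impI)
    fix n m assume nm: "max N1 N2 \<le> n" "n \<le> m"
    have "inverse (real (Suc n)) \<le> inverse (real (Suc N2))"
      using nm by simp
    moreover have "\<bar>min_energy m - min_energy n\<bar> < d\<^sup>2 / 4"
      using nm by (intro N1) auto
    moreover note abs_ge_self[of "min_energy m - min_energy n"]
    ultimately have sq: "integral\<^sup>L Leb01 (\<lambda>x. (fst (near_min n) x - fst (near_min m) x)\<^sup>2)
        + integral\<^sup>L Leb01 (\<lambda>x. (snd (near_min n) x - snd (near_min m) x)\<^sup>2) < d\<^sup>2"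
      using near_min_square_dist[OF nm(2)] N2 by argo
    have sq_nonneg: "0 \<le> integral\<^sup>L Leb01 (\<lambda>x. (fst (near_min n) x - fst (near_min m) x)\<^sup>2)"
      "0 \<le> integral\<^sup>L Leb01 (\<lambda>x. (snd (near_min n) x - snd (near_min m) x)\<^sup>2)"
      by simp_all
    have int: "integrable Leb01 (\<lambda>x. fst (near_min n) x - fst (near_min m) x)"
      "integrable Leb01 (\<lambda>x. snd (near_min n) x - snd (near_min m) x)"
      using unit_valued_integrable(1)[OF near_min_unit_valued(1)] unit_valued_integrable(1)[OF near_min_unit_valued(2)]
      by auto
    have "integral\<^sup>L Leb01 (\<lambda>x. \<bar>fst (near_min n) x - fst (near_min m) x\<bar>) \<le> d"
      using sq sq_nonneg
      by (intro integral_abs_le_of_integral_square_le int(1) \<open>0 < d\<close>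
          unit_valued_diff_integrable(2)[OF near_min_unit_valued(1) near_min_unit_valued(1)]) linarith
    moreover have "integral\<^sup>L Leb01 (\<lambda>x. \<bar>snd (near_min n) x - snd (near_min m) x\<bar>) \<le> d"
      using sq sq_nonneg
      by (intro integral_abs_le_of_integral_square_le int(2) \<open>0 < d\<close>
          unit_valued_diff_integrable(2)[OF near_min_unit_valued(2) near_min_unit_valued(2)]) linarith
    ultimately show "l1_dist n m \<le> e"
      by (simp add: l1_dist_def d_def)
  qed
qed


lemma fractional_cover_UN_capped_variation:
  assumes t: "strict_mono t"
  shows "fractional_cover (\<Union>k. L k)
    (capped_variation (\<lambda>j. fst (near_min (t j)))) (capped_variation (\<lambda>j. snd (near_min (t j))))"
  unfolding fractional_cover_def
proof (intro conjI unit_valued_capped_variation near_min_unit_valued ballI)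
  fix p assume "p \<in> (\<Union>k. L k)"
  then obtain k where "p \<in> L k"
    by blast
  moreover obtain x y where "p = (x, y)"
    by (cases p)
  ultimately have p: "p = (x, y)" "(x, y) \<in> L k"
    by simp_all
  then have xy: "x \<in> {0..1}" "y \<in> {0..1}"
    using subsetD[OF unit_square p(2)] by auto
  have "L k \<subseteq> L (t k)"
    using incseq seq_suble[OF t] by (rule incseqD)
  then have "1 \<le> fst (near_min (t k)) x + snd (near_min (t k)) y"
    using admissibleD(1)[OF near_min(1)[of "t k"]] p(2) by (auto simp: fractional_cover_def)
  also have "\<dots> \<le> capped_variation (\<lambda>j. fst (near_min (t j))) x + capped_variation (\<lambda>j. snd (near_min (t j))) y"
    using capped_variation_ge[OF near_min_unit_valued(1) xy(1)] capped_variation_ge[OF near_min_unit_valued(2) xy(2)]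
    by (rule add_mono)
  finally show "case p of (x, y) \<Rightarrow>
      1 \<le> capped_variation (\<lambda>j. fst (near_min (t j))) x + capped_variation (\<lambda>j. snd (near_min (t j))) y"
    using p(1) by simp
qed

lemma cover_m_UN_le_tail:
  assumes t: "strict_mono t" and steps: "\<And>j. l1_dist (t j) (t (Suc j)) \<le> r j" and "summable r"
  shows "cover_m (\<Union>k. L k) \<le> c + inverse (real (Suc (t 0))) + (\<Sum>j. r j)"
proof -
  define U where "U j = fst (near_min (t j))" for j
  define V where "V j = snd (near_min (t j))" for j
  have U: "unit_valued (U j)" and V: "unit_valued (V j)" for j
    using near_min_unit_valued by (simp_all add: U_def V_def)
  define a where "a j = integral\<^sup>L Leb01 (\<lambda>x. \<bar>U (Suc j) x - U j x\<bar>)" for j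
  define b where "b j = integral\<^sup>L Leb01 (\<lambda>y. \<bar>V (Suc j) y - V j y\<bar>)" for j
  have ab: "a j + b j \<le> r j" for j
    using steps[of j] by (simp add: a_def b_def U_def V_def l1_dist_def abs_minus_commute)
  moreover have "0 \<le> a j" "0 \<le> b j" for j
    by (simp_all add: a_def b_def)
  ultimately have "norm (a j) \<le> r j" "norm (b j) \<le> r j" for j
    by (smt (verit) real_norm_def)+
  then have "summable a" "summable b"
    using summable_comparison_test'[OF \<open>summable r\<close>] by blast+
  have "cover_m (\<Union>k. L k) \<le> integral\<^sup>L Leb01 (capped_variation U) + integral\<^sup>L Leb01 (capped_variation V)"
    using unit_square fractional_cover_UN_capped_variation[OF t]
    by (intro cover_m_le_fractional_cover) (auto simp: U_def[abs_def] V_def[abs_def])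
  also have "\<dots> \<le> (integral\<^sup>L Leb01 (U 0) + integral\<^sup>L Leb01 (V 0)) + ((\<Sum>j. a j) + (\<Sum>j. b j))"
    using integral_capped_variation_le[OF U] integral_capped_variation_le[OF V]
      \<open>summable a\<close> \<open>summable b\<close> unfolding a_def b_def by fastforce
  also have "\<dots> \<le> c + inverse (real (Suc (t 0))) + (\<Sum>j. r j)"
  proof (rule add_mono)
    show "integral\<^sup>L Leb01 (U 0) + integral\<^sup>L Leb01 (V 0) \<le> c + inverse (real (Suc (t 0)))"
      using admissibleD(4)[OF near_min(1)] by (simp add: U_def V_def)
    show "(\<Sum>j. a j) + (\<Sum>j. b j) \<le> (\<Sum>j. r j)"
      using suminf_add[OF \<open>summable a\<close> \<open>summable b\<close>]
        suminf_le[OF ab summable_add[OF \<open>summable a\<close> \<open>summable b\<close>] \<open>summable r\<close>]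
      by simp
  qed
  finally show ?thesis
    by simp
qed

theorem cover_m_UN_le: "cover_m (\<Union>k. L k) \<le> c"
proof -
  obtain s where s: "strict_mono s" "\<And>j. l1_dist (s j) (s (Suc j)) \<le> (1/2) ^ j"
    using Cauchy_subseq_geometric_steps[OF l1_dist_Cauchy] by blast
  have bound: "cover_m (\<Union>k. L k) \<le> c + inverse (real (Suc J)) + (1/2) ^ J * 2" for J
  proof -
    have geometric: "(\<lambda>j. (1/2::real) ^ (j + J)) sums ((1/2) ^ J * 2)"
      using sums_mult2[OF geometric_sums[of "1/2::real"], of "(1/2) ^ J"] by (simp add: power_add mult.commute)
    have "strict_mono (\<lambda>j. s (j + J))"
      using s(1) by (simp add: strict_mono_def)
    moreover have "l1_dist (s (j + J)) (s (Suc j + J)) \<le> (1/2) ^ (j + J)" for j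
      using s(2)[of "j + J"] by simp
    ultimately have "cover_m (\<Union>k. L k) \<le> c + inverse (real (Suc (s J))) + (1/2) ^ J * 2"
      using cover_m_UN_le_tail[of "\<lambda>j. s (j + J)" "\<lambda>j. (1/2) ^ (j + J)"] sums_summable[OF geometric]
        sums_unique[OF geometric]
      by simp
    moreover have "inverse (real (Suc (s J))) \<le> inverse (real (Suc J))"
      using seq_suble[OF s(1), of J] by simp
    ultimately show ?thesis
      by linarith
  qed
  have "(\<lambda>J. c + inverse (real (Suc J)) + (1/2) ^ J * 2) \<longlonglongrightarrow> c + 0 + 0 * 2"
    by (intro tendsto_intros LIMSEQ_inverse_real_of_nat LIMSEQ_realpow_zero) auto
  then show ?thesis
    using bound by (intro LIMSEQ_le_const) auto
qed

end

lemma cover_m_incseq_UN_le: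
  assumes "incseq L" "\<And>k. L k \<subseteq> {0..1} \<times> {0..1}" "\<And>k. cover_m (L k) \<le> c"
  shows "cover_m (\<Union>k. L k) \<le> c"
proof -
  interpret cover_m_chain L c
    using assms by unfold_locales
  show ?thesis
    by (rule cover_m_UN_le)
qed

section \<open>Souslin representation of Borel sets\<close>

definition hilbert_cube :: "(nat \<Rightarrow> real) set" where
  "hilbert_cube = {y. \<forall>k. y k \<in> {0..1}}"

definition square_times_cube :: "((real \<times> real) \<times> (nat \<Rightarrow> real)) set" where
  "square_times_cube = ({0..1} \<times> {0..1}) \<times> hilbert_cube"

definition souslin :: "(real \<times> real) set \<Rightarrow> bool" where
  "souslin L \<longleftrightarrow> (\<exists>K :: nat \<Rightarrow> nat \<Rightarrow> ((real \<times> real) \<times> (nat \<Rightarrow> real)) set.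
      (\<forall>n j. compact (K n j) \<and> K n j \<subseteq> square_times_cube) \<and> L = fst ` (\<Inter>n. \<Union>j. K n j))"

lemma compact_hilbert_cube: "compact hilbert_cube"
proof -
  have "hilbert_cube = PiE UNIV (\<lambda>_. {0..1::real})"
    by (auto simp: hilbert_cube_def PiE_def Pi_def)
  moreover have "compactin (product_topology (\<lambda>_. euclidean) (UNIV :: nat set)) (PiE UNIV (\<lambda>_. {0..1::real}))"
    by (subst compactin_PiE) auto
  ultimately show ?thesis
    by (simp add: euclidean_product_topology)
qed

lemma compact_square_times_cube: "compact square_times_cube"
  unfolding square_times_cube_def by (intro compact_Times compact_hilbert_cube) auto

lemma compact_Collect_continuous_mem:
  assumes "continuous_on UNIV f" "closed C" "compact S"
  shows "compact {p \<in> S. f p \<in> C}"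
proof -
  have "{p \<in> S. f p \<in> C} = f -` C \<inter> S"
    by auto
  then show ?thesis
    using assms by (simp add: closed_Int_compact closed_vimage)
qed

lemma souslin_closed:
  assumes "closed F"
  shows "souslin (F \<inter> {0..1} \<times> {0..1})"
proof -
  let ?G = "(F \<inter> {0..1} \<times> {0..1}) \<times> hilbert_cube"
  have "compact ?G"
    using assms compact_hilbert_cube by (intro compact_Times closed_Int_compact) auto
  moreover have "?G \<subseteq> square_times_cube"
    by (auto simp: square_times_cube_def)
  moreover have "(\<lambda>_. 0) \<in> hilbert_cube"
    by (simp add: hilbert_cube_def)
  then have "F \<inter> {0..1} \<times> {0..1} = fst ` ?G"
    by force
  ultimately show ?thesis
    unfolding souslin_def by (intro exI[of _ "\<lambda>n j. ?G"]) auto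
qed

lemma souslin_seqE:
  assumes "\<And>i::nat. souslin (L i)"
  obtains K :: "nat \<Rightarrow> nat \<Rightarrow> nat \<Rightarrow> ((real \<times> real) \<times> (nat \<Rightarrow> real)) set"
  where "\<And>i n j. compact (K i n j)" "\<And>i n j. K i n j \<subseteq> square_times_cube"
    "\<And>i. L i = fst ` (\<Inter>n. \<Union>j. K i n j)"
proof -
  have "\<forall>i. \<exists>K :: nat \<Rightarrow> nat \<Rightarrow> _. (\<forall>n j. compact (K n j) \<and> K n j \<subseteq> square_times_cube) \<and> L i = fst ` (\<Inter>n. \<Union>j. K n j)"
    using assms by (simp add: souslin_def)
  from choice[OF this] obtain K :: "nat \<Rightarrow> nat \<Rightarrow> nat \<Rightarrow> _" where K: "\<forall>i. (\<forall>n j. compact (K i n j) \<and> K i n j \<subseteq> square_times_cube)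
      \<and> L i = fst ` (\<Inter>n. \<Union>j. K i n j)"
    ..
  show thesis
  proof (rule that)
    show "compact (K i n j)" "K i n j \<subseteq> square_times_cube" "L i = fst ` (\<Inter>n. \<Union>j. K i n j)" for i n j
      using K by simp_all
  qed
qed

lemma UN_prod_decode: "(\<Union>m. f (fst (prod_decode m)) (snd (prod_decode m))) = (\<Union>i. \<Union>j. f i j)"
proof -
  have "(\<exists>m. x \<in> f (fst (prod_decode m)) (snd (prod_decode m))) \<longleftrightarrow> (\<exists>i j. x \<in> f i j)" for x
    by (metis fst_conv prod_encode_inverse snd_conv)
  then show ?thesis
    by (intro set_eqI) simp
qed

lemma INT_prod_decode: "(\<Inter>m. f (fst (prod_decode m)) (snd (prod_decode m))) = (\<Inter>i. \<Inter>j. f i j)"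
proof -
  have "(\<forall>m. x \<in> f (fst (prod_decode m)) (snd (prod_decode m))) \<longleftrightarrow> (\<forall>i j. x \<in> f i j)" for x
    by (metis fst_conv prod_encode_inverse snd_conv)
  then show ?thesis
    by (intro set_eqI) simp
qed

lemma continuous_on_snd_coordinate:
  "continuous_on UNIV (\<lambda>p :: 'a::topological_space \<times> (nat \<Rightarrow> real). snd p k)"
  by (intro continuous_on_compose2[OF continuous_on_product_coordinates continuous_on_snd]) auto

lemma continuous_on_reindex_snd:
  "continuous_on UNIV (\<lambda>p :: 'a::topological_space \<times> (nat \<Rightarrow> real). (fst p, \<lambda>k. snd p (g k)))"
  by (intro continuous_on_Pair continuous_on_fst continuous_on_id continuous_on_coordinatewise_then_product
      continuous_on_snd_coordinate)

lemma souslinI: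
  fixes K :: "nat \<Rightarrow> nat \<Rightarrow> ((real \<times> real) \<times> (nat \<Rightarrow> real)) set"
  assumes "\<And>n j. compact (K n j)" "\<And>n j. K n j \<subseteq> square_times_cube" "L = fst ` (\<Inter>n. \<Union>j. K n j)"
  shows "souslin L"
  unfolding souslin_def by (rule exI[of _ K]) (simp add: assms)

text \<open>Coordinate \<open>0\<close> of the cube records the index \<open>i\<close>; the remaining coordinates carry the witness.\<close>
definition tagged_layer :: "nat \<Rightarrow> ((real \<times> real) \<times> (nat \<Rightarrow> real)) set \<Rightarrow> ((real \<times> real) \<times> (nat \<Rightarrow> real)) set" where
  "tagged_layer i S = {p \<in> square_times_cube. snd p 0 = 1 / (real i + 1) \<and> (fst p, \<lambda>k. snd p (Suc k)) \<in> S}"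

lemma compact_tagged_layer:
  assumes "compact S"
  shows "compact (tagged_layer i S)"
proof -
  have "continuous_on UNIV (\<lambda>p :: (real \<times> real) \<times> (nat \<Rightarrow> real). (snd p 0, fst p, \<lambda>k. snd p (Suc k)))"
    by (rule continuous_on_Pair[OF continuous_on_snd_coordinate continuous_on_reindex_snd])
  then have "compact {p \<in> square_times_cube. (snd p 0, fst p, \<lambda>k. snd p (Suc k)) \<in> {1 / (real i + 1)} \<times> S}"
    by (rule compact_Collect_continuous_mem) (simp_all add: assms compact_imp_closed compact_Times compact_square_times_cube)
  moreover have "tagged_layer i S
      = {p \<in> square_times_cube. (snd p 0, fst p, \<lambda>k. snd p (Suc k)) \<in> {1 / (real i + 1)} \<times> S}"
    by (auto simp: tagged_layer_def)
  ultimately show ?thesis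
    by (simp only:)
qed

lemma fst_INT_UN_tagged_layer:
  fixes K :: "nat \<Rightarrow> nat \<Rightarrow> nat \<Rightarrow> ((real \<times> real) \<times> (nat \<Rightarrow> real)) set"
  assumes K: "\<And>i n j. K i n j \<subseteq> square_times_cube"
  shows "fst ` (\<Inter>n. \<Union>i. \<Union>j. tagged_layer i (K i n j)) = (\<Union>i. fst ` (\<Inter>n. \<Union>j. K i n j))"
proof (intro equalityI subsetI)
  fix x assume "x \<in> (\<Union>i. fst ` (\<Inter>n. \<Union>j. K i n j))"
  then obtain i y where xy: "(x, y) \<in> (\<Inter>n. \<Union>j. K i n j)"
    by force
  then have "y \<in> hilbert_cube" "x \<in> {0..1} \<times> {0..1}"
    using K by (fastforce simp: square_times_cube_def)+
  moreover define y' where "y' k = (if k = 0 then 1 / (real i + 1) else y (k - 1))" for k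
  ultimately have "(x, y') \<in> tagged_layer i (K i n j) \<longleftrightarrow> (x, y) \<in> K i n j" for n j
    by (auto simp: tagged_layer_def square_times_cube_def hilbert_cube_def y'_def)
  then show "x \<in> fst ` (\<Inter>n. \<Union>i. \<Union>j. tagged_layer i (K i n j))"
    using xy by (force intro!: image_eqI[of _ fst "(x, y')"])
next
  fix x assume "x \<in> fst ` (\<Inter>n. \<Union>i. \<Union>j. tagged_layer i (K i n j))"
  then obtain p where p: "x = fst p" "p \<in> (\<Inter>n. \<Union>i. \<Union>j. tagged_layer i (K i n j))"
    by blast
  then obtain i j0 where "p \<in> tagged_layer i (K i 0 j0)"
    by blast
  then have tag: "snd p 0 = 1 / (real i + 1)"
    by (simp add: tagged_layer_def)
  have "(fst p, \<lambda>k. snd p (Suc k)) \<in> (\<Union>j. K i n j)" for n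
  proof -
    obtain i' j where "p \<in> tagged_layer i' (K i' n j)"
      using p(2) by blast
    moreover have "i' = i"
      using calculation tag by (simp add: tagged_layer_def)
    ultimately show ?thesis
      by (auto simp: tagged_layer_def)
  qed
  then have "(fst p, \<lambda>k. snd p (Suc k)) \<in> (\<Inter>n. \<Union>j. K i n j)"
    by blast
  then have "x \<in> fst ` (\<Inter>n. \<Union>j. K i n j)"
    by (rule image_eqI[rotated]) (simp add: p(1))
  then show "x \<in> (\<Union>i. fst ` (\<Inter>n. \<Union>j. K i n j))"
    by blast
qed

lemma souslin_UN:
  assumes "\<And>i::nat. souslin (L i)"
  shows "souslin (\<Union>i. L i)"
proof -
  obtain K :: "nat \<Rightarrow> nat \<Rightarrow> nat \<Rightarrow> _" where K: "\<And>i n j. compact (K i n j)" "\<And>i n j. K i n j \<subseteq> square_times_cube"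
    "\<And>i. L i = fst ` (\<Inter>n. \<Union>j. K i n j)"
    using souslin_seqE[of L, OF assms] by blast
  define K' where "K' i n j = tagged_layer i (K i n j)" for i n j
  have "(\<Union>i. L i) = fst ` (\<Inter>n. \<Union>i. \<Union>j. K' i n j)"
    using fst_INT_UN_tagged_layer[OF K(2)] K(3) by (simp add: K'_def)
  moreover have "compact (K' i n j)" for i n j
    using K(1) by (simp add: K'_def compact_tagged_layer)
  moreover have "K' i n j \<subseteq> square_times_cube" for i n j
    by (auto simp: K'_def tagged_layer_def)
  ultimately show ?thesis
    by (intro souslinI[where K = "\<lambda>n m. K' (fst (prod_decode m)) n (snd (prod_decode m))"])
      (simp_all add: UN_prod_decode[where f = "\<lambda>i j. K' i _ j"])
qed

text \<open>Coordinate \<open>prod_encode (i, k)\<close> of the cube carries coordinate \<open>k\<close> of the witness for the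
  \<open>i\<close>-th set.\<close>
definition coordinate_slice :: "nat \<Rightarrow> ((real \<times> real) \<times> (nat \<Rightarrow> real)) set \<Rightarrow> ((real \<times> real) \<times> (nat \<Rightarrow> real)) set" where
  "coordinate_slice i S = {p \<in> square_times_cube. (fst p, \<lambda>k. snd p (prod_encode (i, k))) \<in> S}"

lemma compact_coordinate_slice: "compact S \<Longrightarrow> compact (coordinate_slice i S)"
  unfolding coordinate_slice_def using continuous_on_reindex_snd compact_square_times_cube
  by (intro compact_Collect_continuous_mem compact_imp_closed)

lemma fst_INT_coordinate_slice:
  fixes K :: "nat \<Rightarrow> nat \<Rightarrow> nat \<Rightarrow> ((real \<times> real) \<times> (nat \<Rightarrow> real)) set"
  assumes K: "\<And>i n j. K i n j \<subseteq> square_times_cube"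
  shows "fst ` (\<Inter>i. \<Inter>n. \<Union>j. coordinate_slice i (K i n j)) = (\<Inter>i. fst ` (\<Inter>n. \<Union>j. K i n j))"
proof (intro equalityI subsetI)
  fix x assume x: "x \<in> (\<Inter>i. fst ` (\<Inter>n. \<Union>j. K i n j))"
  have "\<forall>i. \<exists>y. (x, y) \<in> (\<Inter>n. \<Union>j. K i n j)"
    using x by force
  then obtain y where y: "\<And>i. (x, y i) \<in> (\<Inter>n. \<Union>j. K i n j)"
    by metis
  define z where "z k = y (fst (prod_decode k)) (snd (prod_decode k))" for k
  have "(x, y i) \<in> square_times_cube" for i
    using y[of i] K by blast
  then have "(x, z) \<in> square_times_cube" "(\<lambda>k. z (prod_encode (i, k))) = y i" for i
    by (auto simp: square_times_cube_def hilbert_cube_def z_def)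
  then have "(x, z) \<in> (\<Inter>i. \<Inter>n. \<Union>j. coordinate_slice i (K i n j))"
    using y by (auto simp: coordinate_slice_def)
  then show "x \<in> fst ` (\<Inter>i. \<Inter>n. \<Union>j. coordinate_slice i (K i n j))"
    by force
next
  fix x assume "x \<in> fst ` (\<Inter>i. \<Inter>n. \<Union>j. coordinate_slice i (K i n j))"
  then obtain p where "x = fst p" "p \<in> (\<Inter>i. \<Inter>n. \<Union>j. coordinate_slice i (K i n j))"
    by blast
  then have "(x, \<lambda>k. snd p (prod_encode (i, k))) \<in> (\<Inter>n. \<Union>j. K i n j)" for i
    by (auto simp: coordinate_slice_def)
  then have "x \<in> fst ` (\<Inter>n. \<Union>j. K i n j)" for i
    by (rule image_eqI[rotated]) simp
  then show "x \<in> (\<Inter>i. fst ` (\<Inter>n. \<Union>j. K i n j))"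
    by blast
qed

lemma souslin_INT:
  assumes "\<And>i::nat. souslin (L i)"
  shows "souslin (\<Inter>i. L i)"
proof -
  obtain K :: "nat \<Rightarrow> nat \<Rightarrow> nat \<Rightarrow> _" where K: "\<And>i n j. compact (K i n j)" "\<And>i n j. K i n j \<subseteq> square_times_cube"
    "\<And>i. L i = fst ` (\<Inter>n. \<Union>j. K i n j)"
    using souslin_seqE[of L, OF assms] by blast
  define K' where "K' i n j = coordinate_slice i (K i n j)" for i n j
  have "(\<Inter>i. L i) = fst ` (\<Inter>i. \<Inter>n. \<Union>j. K' i n j)"
    using fst_INT_coordinate_slice[OF K(2)] K(3) by (simp add: K'_def)
  moreover have "compact (K' i n j)" for i n j
    using K(1) by (simp add: K'_def compact_coordinate_slice)
  moreover have "K' i n j \<subseteq> square_times_cube" for i n j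
    by (auto simp: K'_def coordinate_slice_def)
  ultimately show ?thesis
    by (intro souslinI[where K = "\<lambda>m j. K' (fst (prod_decode m)) (snd (prod_decode m)) j"])
      (simp_all add: INT_prod_decode[where f = "\<lambda>i n. \<Union>j. K' i n j"])
qed

lemma souslin_open:
  assumes "open U"
  shows "souslin (U \<inter> {0..1} \<times> {0..1})"
proof -
  have "fsigma_in euclidean U"
    using open_imp_fsigma_in[OF metrizable_space_euclidean, of U] assms open_openin by blast
  then have "\<exists>C. (\<forall>n. closedin euclidean (C n)) \<and> (\<forall>n. C n \<subseteq> C (Suc n)) \<and> \<Union>(range C) = U"
    by (simp only: fsigma_in_ascending)
  then obtain C :: "nat \<Rightarrow> (real \<times> real) set"
    where "(\<forall>n. closedin euclidean (C n)) \<and> (\<forall>n. C n \<subseteq> C (Suc n)) \<and> \<Union>(range C) = U"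
    by (rule exE)
  then have C: "\<And>n. closed (C n)" "(\<Union>n. C n) = U"
    by simp_all
  then have "U \<inter> {0..1} \<times> {0..1} = (\<Union>n. C n \<inter> {0..1} \<times> {0..1})"
    by blast
  moreover have "souslin (\<Union>n. C n \<inter> {0..1} \<times> {0..1})"
    using C(1) by (intro souslin_UN souslin_closed)
  ultimately show ?thesis
    by (simp only:)
qed

lemma souslin_borel:
  assumes "L \<in> sets borel" "L \<subseteq> {0..1} \<times> {0..1}"
  shows "souslin L"
proof -
  have "L \<in> sigma_sets UNIV {S. open S}"
    using assms(1) by (simp add: sets_borel)
  then have "souslin (L \<inter> {0..1} \<times> {0..1}) \<and> souslin (- L \<inter> {0..1} \<times> {0..1})"
  proof (induction rule: sigma_sets.induct)
    case (Basic U)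
    then show ?case
      by (simp add: souslin_open souslin_closed closed_Compl)
  next
    case Empty
    then show ?case
      using souslin_closed[of "{}"] souslin_closed[of UNIV] by simp
  next
    case (Compl A)
    then show ?case
      by (simp add: Diff_eq)
  next
    case (Union A)
    have "souslin (\<Union>i. A i \<inter> {0..1} \<times> {0..1})" "souslin (\<Inter>i. - A i \<inter> {0..1} \<times> {0..1})"
      using Union.IH by (blast intro: souslin_UN souslin_INT)+
    moreover have "(\<Union>i. A i) \<inter> {0..1} \<times> {0..1} = (\<Union>i. A i \<inter> {0..1} \<times> {0..1})"
      "- (\<Union>i. A i) \<inter> {0..1} \<times> {0..1} = (\<Inter>i. - A i \<inter> {0..1} \<times> {0..1})"
      by blast+
    ultimately show ?case
      by (simp only:)
  qed
  then show ?thesis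
    using assms(2) by (simp add: Int_absorb2)
qed

section \<open>Capacitability\<close>

lemma compact_decseq_subset_open:
  fixes D :: "nat \<Rightarrow> 'a::t2_space set"
  assumes D: "\<And>n. compact (D n)" "decseq D" and W: "open W" "(\<Inter>n. D n) \<subseteq> W"
  obtains n where "D n \<subseteq> W"
proof -
  have "open (W \<union> - D n)" if "n \<in> UNIV" for n
    using W(1) D(1) by (intro open_Un open_Compl compact_imp_closed)
  moreover have "D 0 \<subseteq> (\<Union>n\<in>UNIV. W \<union> - D n)"
    using W(2) by blast
  ultimately obtain J where J: "J \<subseteq> UNIV" "finite J" "D 0 \<subseteq> (\<Union>n\<in>J. W \<union> - D n)"
    by (rule compactE_image[OF D(1)[of 0]])
  define m where "m = Max (insert 0 J)"
  have "D m \<subseteq> D n" if "n \<in> insert 0 J" for n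
    using D(2) J(2) that by (simp add: m_def decseqD)
  then have "D m \<subseteq> W"
    using J(3) by blast
  then show thesis
    by (rule that)
qed

lemma cover_m_incseq_UN_gt:
  assumes "incseq A" "\<And>j. A j \<subseteq> {0..1} \<times> {0..1}" "a < cover_m (\<Union>j. A j)"
  obtains j where "a < cover_m (A j)"
  using cover_m_incseq_UN_le[OF assms(1,2), of a] assms(3) by (meson not_le)

lemma cover_m_fst_INT_ge:
  fixes D :: "nat \<Rightarrow> ((real \<times> real) \<times> 'b::t2_space) set"
  assumes D: "\<And>n. compact (D n)" "decseq D" "fst ` D 0 \<subseteq> {0..1} \<times> {0..1}"
    and S: "\<And>n. S n \<subseteq> fst ` D n" "\<And>n. a \<le> cover_m (S n)"
  shows "a \<le> cover_m (fst ` (\<Inter>n. D n))"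
proof (rule ccontr)
  have D_square: "fst ` D n \<subseteq> {0..1} \<times> {0..1}" for n
    using decseqD[OF D(2), of 0 n] D(3) by blast
  assume "\<not> a \<le> cover_m (fst ` (\<Inter>n. D n))"
  moreover have "fst ` (\<Inter>n. D n) \<subseteq> {0..1} \<times> {0..1}"
    using D(3) by blast
  ultimately obtain W where W: "open W" "fst ` (\<Inter>n. D n) \<subseteq> W"
    and small: "\<And>L'. L' \<subseteq> {0..1} \<times> {0..1} \<Longrightarrow> L' \<subseteq> W \<Longrightarrow> cover_m L' < a"
    using cover_m_less_open_nhd[of "fst ` (\<Inter>n. D n)" a] by (metis not_le)
  obtain n where "D n \<subseteq> fst -` W"
    using compact_decseq_subset_open[OF D(1,2) open_vimage_fst[OF W(1)]] W(2) by blast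
  then have "cover_m (S n) < a"
    using S(1)[of n] D_square[of n] by (intro small) blast+
  then show False
    using S(2)[of n] by simp
qed

lemma cover_m_fst_finite_layer:
  fixes C :: "nat \<Rightarrow> ((real \<times> real) \<times> (nat \<Rightarrow> real)) set"
  assumes "G \<subseteq> square_times_cube" "G \<subseteq> (\<Union>j. C j)" "a < cover_m (fst ` G)"
  obtains j where "a < cover_m (fst ` (G \<inter> (\<Union>i\<le>j. C i)))"
proof -
  define C' where "C' j = (\<Union>i\<le>j. C i)" for j
  have "G \<subseteq> (\<Union>j. C' j)"
  proof
    fix p assume "p \<in> G"
    then obtain j where "p \<in> C j"
      using assms(2) by blast
    then show "p \<in> (\<Union>j. C' j)"
      by (auto simp: C'_def)
  qed
  then have "(\<Union>j. fst ` (G \<inter> C' j)) = fst ` G"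
    by blast
  moreover have "incseq (\<lambda>j. fst ` (G \<inter> C' j))"
    by (force simp: incseq_def C'_def)
  moreover have "fst ` (G \<inter> C' j) \<subseteq> {0..1} \<times> {0..1}" for j
    using assms(1) by (fastforce simp: square_times_cube_def)
  ultimately obtain j where "a < cover_m (fst ` (G \<inter> C' j))"
    using cover_m_incseq_UN_gt[of "\<lambda>j. fst ` (G \<inter> C' j)" a] assms(3) by metis
  then show thesis
    by (intro that) (simp add: C'_def)
qed

text \<open>The \<open>K\<^sub>\<sigma>\<^sub>\<delta>\<close> set is cut down one layer at a time, keeping \<open>cover_m\<close> of the
  projection above \<open>a\<close>.\<close>
lemma K_sigma_delta_nested_compacts:
  fixes K :: "nat \<Rightarrow> nat \<Rightarrow> ((real \<times> real) \<times> (nat \<Rightarrow> real)) set"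
  defines "G \<equiv> \<Inter>n. \<Union>j. K n j"
  assumes K: "\<And>n j. compact (K n j)" "\<And>n j. K n j \<subseteq> square_times_cube" and a: "a < cover_m (fst ` G)"
  obtains D where "\<And>n. compact (D n)" "\<And>n. D n \<subseteq> square_times_cube" "decseq D"
    "\<And>n. a < cover_m (fst ` (G \<inter> D n))" "(\<Inter>n. D n) \<subseteq> G"
proof -
  define good where "good D \<longleftrightarrow> compact D \<and> D \<subseteq> square_times_cube \<and> a < cover_m (fst ` (G \<inter> D))" for D
  have G_sub: "G \<subseteq> square_times_cube"
    unfolding G_def using K(2) by blast
  then have "good square_times_cube"
    using a by (simp add: good_def compact_square_times_cube Int_absorb2)
  moreover have "\<exists>D'. good D' \<and> (\<exists>j. D' = D \<inter> (\<Union>i\<le>j. K n i))" if "good D" for D n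
  proof -
    have "G \<inter> D \<subseteq> square_times_cube"
      using G_sub by blast
    moreover have "G \<inter> D \<subseteq> (\<Union>j. K n j)"
      by (auto simp: G_def)
    moreover have "a < cover_m (fst ` (G \<inter> D))"
      using \<open>good D\<close> by (simp add: good_def)
    ultimately obtain j where "a < cover_m (fst ` (G \<inter> D \<inter> (\<Union>i\<le>j. K n i)))"
      by (rule cover_m_fst_finite_layer)
    moreover have "compact (\<Union>i\<le>j. K n i)"
      using K(1) by auto
    ultimately show ?thesis
      using \<open>good D\<close> by (intro exI[of _ "D \<inter> (\<Union>i\<le>j. K n i)"]) (auto simp: good_def Int_assoc)
  qed
  ultimately obtain D where "\<forall>n. good (D n) \<and> (\<exists>j. D (Suc n) = D n \<inter> (\<Union>i\<le>j. K n i))"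
    using dependent_nat_choice[of "\<lambda>_. good" "\<lambda>n D D'. \<exists>j. D' = D \<inter> (\<Union>i\<le>j. K n i)"] by blast
  then have D: "\<And>n. good (D n)" and D_Suc: "\<And>n. \<exists>j. D (Suc n) = D n \<inter> (\<Union>i\<le>j. K n i)"
    by simp_all
  show thesis
  proof (rule that)
    show "compact (D n)" "D n \<subseteq> square_times_cube" "a < cover_m (fst ` (G \<inter> D n))" for n
      using D by (simp_all add: good_def)
    show "decseq D"
      using D_Suc by (intro decseq_SucI) blast
    have "(\<Inter>n. D n) \<subseteq> (\<Union>j. K n j)" for n
      using D_Suc[of n] by blast
    then show "(\<Inter>n. D n) \<subseteq> G"
      by (auto simp: G_def)
  qed
qed

lemma souslin_capacitable:
  assumes "souslin L" "a < cover_m L"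
  obtains K where "compact K" "K \<subseteq> L" "a \<le> cover_m K"
proof -
  obtain K :: "nat \<Rightarrow> nat \<Rightarrow> _"
    where "(\<forall>n j. compact (K n j) \<and> K n j \<subseteq> square_times_cube) \<and> L = fst ` (\<Inter>n. \<Union>j. K n j)"
    using assms(1) unfolding souslin_def by (rule exE)
  then have K: "\<And>n j. compact (K n j)" "\<And>n j. K n j \<subseteq> square_times_cube"
    and L: "L = fst ` (\<Inter>n. \<Union>j. K n j)"
    by simp_all
  have a: "a < cover_m (fst ` (\<Inter>n. \<Union>j. K n j))"
    using assms(2) L by simp
  obtain D where D: "\<And>n. compact (D n)" "\<And>n. D n \<subseteq> square_times_cube" "decseq D"
    "\<And>n. a < cover_m (fst ` ((\<Inter>n. \<Union>j. K n j) \<inter> D n))" "(\<Inter>n. D n) \<subseteq> (\<Inter>n. \<Union>j. K n j)"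
    using K_sigma_delta_nested_compacts[OF K a] by blast
  show thesis
  proof (rule that)
    have "compact ((\<Inter>n. D n) \<inter> D 0)"
      using D(1) by (intro closed_Int_compact closed_INT) (auto intro: compact_imp_closed)
    moreover have "(\<Inter>n. D n) \<inter> D 0 = (\<Inter>n. D n)"
      by blast
    ultimately have "compact (\<Inter>n. D n)"
      by simp
    then show "compact (fst ` (\<Inter>n. D n))"
      by (intro compact_continuous_image continuous_intros)
    show "fst ` (\<Inter>n. D n) \<subseteq> L"
      using D(5) L by blast
    have "fst ` D 0 \<subseteq> {0..1} \<times> {0..1}"
      using D(2)[of 0] by (force simp: square_times_cube_def)
    then show "a \<le> cover_m (fst ` (\<Inter>n. D n))"
      using D(1,3,4) by (intro cover_m_fst_INT_ge[where S = "\<lambda>n. fst ` ((\<Inter>n. \<Union>j. K n j) \<inter> D n)"])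
        (auto simp: less_imp_le)
  qed
qed

theorem lemmaA4:
  fixes L :: "(real \<times> real) set"
  assumes "L \<in> sets borel"
    and "L \<subseteq> {0..1} \<times> {0..1}"
    and "cover_m L > 0"
  shows "\<exists>K. compact K \<and> K \<subseteq> L \<and> cover_m K > 0"
proof -
  have "cover_m L / 2 < cover_m L"
    using assms(3) by simp
  with souslin_borel[OF assms(1,2)] obtain K where "compact K" "K \<subseteq> L" "cover_m L / 2 \<le> cover_m K"
    by (rule souslin_capacitable)
  then show ?thesis
    using assms(3) by (intro exI[of _ K]) auto
qed

end
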